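(* Suppose $\mathcal C$ is a Distribution Problem satisfying Thin Individual Indifference. (a) If $\mathcal D$ is a quota rule with quota $q<n$, then for any selections $\hat\phi_1,\dots,\hat\phi_T$ of $\Phi^{\mathrm{or}}_{\mathcal D}$: if $T\ge\lceil n/(n-q)\rceil$ then $[\hat\phi_1\circ\cdots\circ\hat\phi_T](x)\in X_A^*$ for all $x\in X$. (b) If $\mathcal D$ is a veto-proof voting rule, then for any selections $\hat\phi_1,\dots,\hat\phi_T$ of $\Phi^{\mathrm{or}}_{\mathcal D}$: if $T\ge n$ then $[\hat\phi_1\circ\cdots\circ\hat\phi_T](x)\in X_A^*$ for all $x\in X$.
   Context: Collective choice problem $\mathcal C$: voters $N=\{1,\dots,n\}$, agenda setter $A$, compact metrizable policy space $X$, continuous preferences $\succsim_i$ with continuous utilities $u_i$; $X_A^*=\arg\max_X u_A$. Distribution Problem: for every $x$ and player $i$, (Scarcity) if $u_i(x)<\max_X u_i$ then either some $j\ne i$ has $u_j(x)>\min_X u_j$ or some $y$ has $u_k(y)>u_k(x)$ for all players $k$; (Transferability) if $u_i(x)>\min_X u_i$ then some $y$ has $u_j(y)>u_j(x)$ for all players $j\ne i$. Thin Individual Indifference: for every player $i$ and $x$, $\{y: y\sim_i x\}\setminus\{x\}$ has empty interior. Voting rule: collection $\mathcal D\subseteq 2^N$ of winning coalitions; quota rule with quota $q$: $\mathcal D=\{D\subseteq N:|D|\ge q\}$; veto-proof: for each voter $i$ some $D\in\mathcal D$ has $D\subseteq N\setminus\{i\}$. $M^{w}_{\mathcal D}(x)=\{y:\exists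 D\in\mathcal D,\ y\succsim_i x\ \forall i\in D\}$, $M^{s}_{\mathcal D}(x)=\{y:\exists D\in\mathcal D,\ y\succ_i x\ \forall i\in D\}$, $M^{as}_{\mathcal D}(x)=\mathrm{cl}[M^{s}_{\mathcal D}(x)]\cup\{x\}$, $V_A^{as}(x\mid\mathcal D)=\max_{y\in M^{as}_{\mathcal D}(x)}u_A(y)$, $\Phi^{\mathrm{or}}_{\mathcal D}(x)=\{y\in M^{w}_{\mathcal D}(x): u_A(y)\ge V_A^{as}(x\mid\mathcal D)\}$. A selection of $\Phi^{\mathrm{or}}_{\mathcal D}$ is a map $\hat\phi:X\to X$ with $\hat\phi(x)\in\Phi^{\mathrm{or}}_{\mathcal D}(x)$ for all $x$. *)

theory Defs
  imports "HOL-Analysis.Analysis"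
begin

text \<open>Encoding: players are 0..n; player 0 is the agenda setter A, players 1..n are the
voters N. The utility of player i is u i; x \<succsim>_i y means u i x \<ge> u i y.\<close>

definition voters :: "nat \<Rightarrow> nat set" where
  "voters n = {1..n}"

definition players :: "nat \<Rightarrow> nat set" where
  "players n = {0..n}"

text \<open>Distribution Problem: Scarcity and Transferability
  (u_i(x) < max_X u_i  iff  some y in X has u_i(y) > u_i(x); similarly for min).\<close>
definition distribution_problem :: "'x set \<Rightarrow> (nat \<Rightarrow> 'x \<Rightarrow> real) \<Rightarrow> nat \<Rightarrow> bool" where
  "distribution_problem X u n \<longleftrightarrow>
     (\<forall>x\<in>X. \<forall>i\<in>players n.
        ((\<exists>y\<in>X. u i y > u i x) \<longrightarrow>
           ((\<exists>j\<in>players n. j \<noteq> i \<and> (\<exists>z\<in>X. u j z < u j x)) \<or>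
            (\<exists>y\<in>X. \<forall>k\<in>players n. u k y > u k x))) \<and>
        ((\<exists>z\<in>X. u i z < u i x) \<longrightarrow>
           (\<exists>y\<in>X. \<forall>j\<in>players n - {i}. u j y > u j x)))"

definition thin_individual_indifference :: "'x::topological_space set \<Rightarrow> (nat \<Rightarrow> 'x \<Rightarrow> real) \<Rightarrow> nat \<Rightarrow> bool" where
  "thin_individual_indifference X u n \<longleftrightarrow>
     (\<forall>i\<in>players n. \<forall>x\<in>X.
        (top_of_set X) interior_of ({y\<in>X. u i y = u i x} - {x}) = {})"

definition quota_rule :: "nat \<Rightarrow> nat \<Rightarrow> nat set set" where
  "quota_rule n q = {S. S \<subseteq> voters n \<and> card S \<ge> q}"

definition veto_proof :: "nat \<Rightarrow> nat set set \<Rightarrow> bool" where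
  "veto_proof n D \<longleftrightarrow> (\<forall>i\<in>voters n. \<exists>S\<in>D. S \<subseteq> voters n - {i})"

definition Mw :: "'x set \<Rightarrow> (nat \<Rightarrow> 'x \<Rightarrow> real) \<Rightarrow> nat set set \<Rightarrow> 'x \<Rightarrow> 'x set" where
  "Mw X u D x = {y\<in>X. \<exists>S\<in>D. \<forall>i\<in>S. u i y \<ge> u i x}"

definition Ms :: "'x set \<Rightarrow> (nat \<Rightarrow> 'x \<Rightarrow> real) \<Rightarrow> nat set set \<Rightarrow> 'x \<Rightarrow> 'x set" where
  "Ms X u D x = {y\<in>X. \<exists>S\<in>D. \<forall>i\<in>S. u i y > u i x}"

definition Mas :: "'x::topological_space set \<Rightarrow> (nat \<Rightarrow> 'x \<Rightarrow> real) \<Rightarrow> nat set set \<Rightarrow> 'x \<Rightarrow> 'x set" where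
  "Mas X u D x = closure (Ms X u D x) \<union> {x}"

text \<open>V_A^as(x|D) = max over M^as(x) of u_A (attained: M^as(x) is compact and nonempty).\<close>
definition VAas :: "'x::topological_space set \<Rightarrow> (nat \<Rightarrow> 'x \<Rightarrow> real) \<Rightarrow> nat set set \<Rightarrow> 'x \<Rightarrow> real" where
  "VAas X u D x = Sup (u 0 ` Mas X u D x)"

definition Phi_or :: "'x::topological_space set \<Rightarrow> (nat \<Rightarrow> 'x \<Rightarrow> real) \<Rightarrow> nat set set \<Rightarrow> 'x \<Rightarrow> 'x set" where
  "Phi_or X u D x = {y\<in>Mw X u D x. u 0 y \<ge> VAas X u D x}"

definition is_selection :: "'x::topological_space set \<Rightarrow> (nat \<Rightarrow> 'x \<Rightarrow> real) \<Rightarrow> nat set set \<Rightarrow> ('x \<Rightarrow> 'x) \<Rightarrow> bool" where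
  "is_selection X u D f \<longleftrightarrow> (\<forall>x\<in>X. f x \<in> Phi_or X u D x)"

text \<open>compose_sel phi T = phi 1 \<circ> phi 2 \<circ> ... \<circ> phi T (phi T applied first).\<close>
fun compose_sel :: "(nat \<Rightarrow> 'x \<Rightarrow> 'x) \<Rightarrow> nat \<Rightarrow> 'x \<Rightarrow> 'x" where
  "compose_sel phi 0 = id"
| "compose_sel phi (Suc k) = compose_sel phi k \<circ> phi (Suc k)"

definition XA_star :: "'x set \<Rightarrow> (nat \<Rightarrow> 'x \<Rightarrow> real) \<Rightarrow> 'x set" where
  "XA_star X u = {x\<in>X. \<forall>y\<in>X. u 0 y \<le> u 0 x}"

end

theory Submission imports Defs begin

text \<open>Call a voter expropriated at x if x gives him his minimal utility. Along any chain of
  agenda-setter-optimal proposals, expropriated voters stay expropriated: a voter left out of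
  the supporting coalition would otherwise receive a transfer that the agenda setter could
  exploit, and a supporting voter who is not held at his minimum would, by Thin Individual
  Indifference, yield an open set of proposals preferred by the agenda setter. Hence under a
  quota rule each round expropriates at least n - q further voters (or all of them), and under
  a veto-proof rule at least one; once all voters are expropriated, Scarcity forces the
  proposal to be ideal for the agenda setter.\<close>

lemma zero_in_players [simp]: "0 \<in> players n"
  by (simp add: players_def)

lemma voters_subset_players: "voters n \<subseteq> players n"
  by (auto simp: voters_def players_def)

lemma zero_notin_voters [simp]: "0 \<notin> voters n"
  by (simp add: voters_def)

lemma finite_voters [simp]: "finite (voters n)"
  and card_voters [simp]: "card (voters n) = n"
  by (auto simp: voters_def)

lemma quota_rule_subset_Pow_voters: "quota_rule n q \<subseteq> Pow (voters n)"
  by (auto simp: quota_rule_def)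

lemma Phi_orD:
  assumes "y \<in> Phi_or X u D x"
  shows "y \<in> X" "VAas X u D x \<le> u 0 y" "\<exists>S\<in>D. \<forall>i\<in>S. u i x \<le> u i y"
  using assms by (auto simp: Phi_or_def Mw_def)

lemma Ms_subset_Mas: "Ms X u D x \<subseteq> Mas X u D x"
  using closure_subset by (auto simp: Mas_def)

lemma self_in_Mas: "x \<in> Mas X u D x"
  by (simp add: Mas_def)

lemma openin_strict_upper_set:
  fixes f :: "'i \<Rightarrow> 'x::topological_space \<Rightarrow> real"
  assumes "finite I" "\<forall>i\<in>I. continuous_on X (f i)"
  shows "openin (top_of_set X) {w\<in>X. \<forall>i\<in>I. c i < f i w}"
proof -
  have "openin (top_of_set X) ((\<Inter>i\<in>I. X \<inter> f i -` {c i<..}) \<inter> topspace (top_of_set X))"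
    using assms by (intro openin_INT) (auto intro!: continuous_openin_preimage_gen)
  also have "(\<Inter>i\<in>I. X \<inter> f i -` {c i<..}) \<inter> topspace (top_of_set X) = {w\<in>X. \<forall>i\<in>I. c i < f i w}"
    by auto
  finally show ?thesis .
qed

lemma ceiling_divide_le_imp_le_mult:
  assumes "0 < b" "\<lceil>real a / real b\<rceil> \<le> int T"
  shows "a \<le> T * b"
proof -
  have "real a / real b \<le> real T"
    using assms(2) by (simp add: ceiling_le_iff)
  then have "real a \<le> real (T * b)"
    using assms(1) by (simp add: divide_le_eq)
  then show ?thesis
    by linarith
qed

lemma compose_sel_Suc_outer: "compose_sel phi (Suc k) = phi 1 \<circ> compose_sel (\<lambda>t. phi (Suc t)) k"
proof (induction k)
  case 0
  then show ?case by simp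
next
  case (Suc k)
  show ?case
    unfolding compose_sel.simps(2)[of phi "Suc k"] Suc.IH by (simp add: comp_assoc)
qed

lemma compose_sel_closed:
  assumes "\<forall>t\<in>{1..k}. \<forall>x\<in>X. phi t x \<in> X" "x \<in> X"
  shows "compose_sel phi k x \<in> X"
  using assms by (induction k arbitrary: x) auto

lemma compose_sel_progress:
  fixes m :: "'x \<Rightarrow> nat"
  assumes step: "\<forall>t\<in>{1..k}. \<forall>x\<in>X. phi t x \<in> X \<and> min n (m x + d) \<le> m (phi t x)"
    and "x \<in> X"
  shows "min n (m x + k * d) \<le> m (compose_sel phi k x)"
  using assms
proof (induction k arbitrary: x)
  case 0
  then show ?case by simp
next
  case (Suc k)
  let ?y = "phi (Suc k) x"
  have "?y \<in> X" and "min n (m x + d) \<le> m ?y"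
    using Suc.prems by auto
  moreover have "min n (m ?y + k * d) \<le> m (compose_sel phi k ?y)"
    using Suc.IH Suc.prems(1) \<open>?y \<in> X\<close> by auto
  ultimately show ?case
    by simp
qed

locale distribution_setting =
  fixes X :: "'x::metric_space set" and u :: "nat \<Rightarrow> 'x \<Rightarrow> real" and n :: nat
  assumes compact: "compact X"
    and continuous: "\<forall>i\<in>players n. continuous_on X (u i)"
    and distribution: "distribution_problem X u n"
begin

definition expropriated :: "'x \<Rightarrow> nat set" where
  "expropriated x = {i\<in>voters n. \<forall>z\<in>X. u i x \<le> u i z}"

lemma expropriated_subset_voters: "expropriated x \<subseteq> voters n"
  by (auto simp: expropriated_def)

lemma finite_expropriated [simp]: "finite (expropriated x)"
  using finite_subset[OF expropriated_subset_voters] by simp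

lemma scarcity:
  assumes "i \<in> players n" "x \<in> X" "y \<in> X" "u i x < u i y"
  shows "(\<exists>j\<in>players n - {i}. \<exists>z\<in>X. u j z < u j x) \<or> (\<exists>z\<in>X. \<forall>k\<in>players n. u k x < u k z)"
  using distribution assms unfolding distribution_problem_def by blast

lemma transfer_from_unexpropriated:
  assumes "j \<in> voters n" "j \<notin> expropriated y" "y \<in> X"
  obtains z where "z \<in> X" "\<forall>k\<in>players n - {j}. u k y < u k z"
proof -
  obtain z0 where "z0 \<in> X" "u j z0 < u j y"
    using assms(1,2) by (auto simp: expropriated_def not_le)
  then show ?thesis
    using that distribution assms voters_subset_players unfolding distribution_problem_def by blast
qed

lemma VAas_upper:
  assumes "x \<in> X" "w \<in> Mas X u D x"
  shows "u 0 w \<le> VAas X u D x"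
proof -
  have "closure (Ms X u D x) \<subseteq> X"
    using compact by (intro closure_minimal) (auto simp: Ms_def compact_imp_closed)
  then have "Mas X u D x \<subseteq> X"
    using assms(1) by (auto simp: Mas_def)
  moreover have "bdd_above (u 0 ` X)"
    using compact continuous
    by (simp add: bounded_imp_bdd_above compact_continuous_image compact_imp_bounded)
  ultimately have "bdd_above (u 0 ` Mas X u D x)"
    by (meson bdd_above_mono image_mono)
  then show ?thesis
    unfolding VAas_def using assms(2) by (simp add: cSup_upper)
qed

lemma Phi_or_setter_optimal:
  assumes "x \<in> X" "y \<in> Phi_or X u D x" "S \<in> D" "\<forall>i\<in>S. u i x \<le> u i y"
    "z \<in> X" "\<forall>i\<in>S. u i y < u i z"
  shows "u 0 z \<le> u 0 y"
proof -
  have "z \<in> Ms X u D x"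
    using assms(3-6) unfolding Ms_def by force
  then have "u 0 z \<le> VAas X u D x"
    using VAas_upper assms(1) Ms_subset_Mas by blast
  also have "\<dots> \<le> u 0 y"
    using Phi_orD(2)[OF assms(2)] .
  finally show ?thesis .
qed

lemma expropriated_outside_coalition:
  assumes "x \<in> X" "y \<in> Phi_or X u D x" "S \<in> D" "S \<subseteq> voters n" "\<forall>i\<in>S. u i x \<le> u i y"
    "j \<in> voters n - S"
  shows "j \<in> expropriated y"
proof (rule ccontr)
  assume "j \<notin> expropriated y"
  then obtain z where "z \<in> X" and better: "\<forall>k\<in>players n - {j}. u k y < u k z"
    using transfer_from_unexpropriated assms(6) Phi_orD(1)[OF assms(2)] by blast
  have "0 \<noteq> j"
    using assms(6) zero_notin_voters by blast
  then have "u 0 y < u 0 z"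
    using better by simp
  moreover have "\<forall>i\<in>S. u i y < u i z"
    using better assms(4,6) voters_subset_players by blast
  ultimately show False
    using Phi_or_setter_optimal[OF assms(1-3,5) \<open>z \<in> X\<close>] by linarith
qed

lemma thin_indifference_openin:
  assumes "thin_individual_indifference X u n" "i \<in> players n" "x \<in> X"
    "openin (top_of_set X) U" "\<forall>w\<in>U. u i w = u i x"
  shows "U \<subseteq> {x}"
proof -
  have "openin (top_of_set X) (U - {x})"
    using assms(3,4) by (simp add: closed_subset openin_diff)
  moreover have "U - {x} \<subseteq> {y\<in>X. u i y = u i x} - {x}"
    using assms(5) openin_subset[OF assms(4)] by auto
  ultimately have "U - {x} \<subseteq> top_of_set X interior_of ({y\<in>X. u i y = u i x} - {x})"
    by (rule interior_of_maximal[rotated])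
  then show ?thesis
    using assms(1-3) unfolding thin_individual_indifference_def by blast
qed

lemma coalition_member_indifferent:
  assumes "x \<in> X" "S \<in> D" "j \<in> S" "j \<in> expropriated x"
    "w \<in> X" "VAas X u D x < u 0 w" "\<forall>i\<in>S - {j}. u i x < u i w"
  shows "u j w = u j x"
proof -
  have "u j x \<le> u j w"
    using assms(4,5) by (auto simp: expropriated_def)
  moreover have "\<not> u j x < u j w"
  proof
    assume "u j x < u j w"
    then have "w \<in> Ms X u D x"
      using assms(2,3,5,7) unfolding Ms_def by blast
    then have "u 0 w \<le> VAas X u D x"
      using VAas_upper[OF assms(1)] Ms_subset_Mas by blast
    then show False
      using assms(6) by simp
  qed
  ultimately show ?thesis
    by linarith
qed

lemma expropriated_coalition_member_persistent:
  assumes thin: "thin_individual_indifference X u n"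
    and x: "x \<in> X" and y: "y \<in> Phi_or X u D x"
    and S: "S \<in> D" "S \<subseteq> voters n" "\<forall>i\<in>S. u i x \<le> u i y"
    and j: "j \<in> S" "j \<in> expropriated x"
  shows "j \<in> expropriated y"
proof (rule ccontr)
  assume "j \<notin> expropriated y"
  then obtain z where "z \<in> X" and better: "\<forall>k\<in>players n - {j}. u k y < u k z"
    using transfer_from_unexpropriated j S(2) Phi_orD(1)[OF y] by blast
  define U where "U = {w\<in>X. VAas X u D x < u 0 w} \<inter> {w\<in>X. \<forall>i\<in>S - {j}. u i x < u i w}"
  have "finite (S - {j})"
    using S(2) finite_subset finite_voters by blast
  then have "openin (top_of_set X) U"
    unfolding U_def using continuous S(2) voters_subset_players
    by (intro openin_Int openin_strict_upper_set[where I = "{0}" and c = "\<lambda>_. VAas X u D x", simplified]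
        openin_strict_upper_set) auto
  moreover have "\<forall>w\<in>U. u j w = u j x"
    using coalition_member_indifferent[OF x S(1) j] by (auto simp: U_def)
  ultimately have "U \<subseteq> {x}"
    using thin_indifference_openin[OF thin _ x] j S(2) voters_subset_players by blast
  moreover have "z \<in> U"
  proof -
    have "0 \<in> players n - {j}"
      using j S(2) zero_in_players zero_notin_voters by blast
    then have "VAas X u D x < u 0 z"
      using Phi_orD(2)[OF y] better by (meson le_less_trans)
    moreover have "\<forall>i\<in>S - {j}. u i x < u i z"
    proof
      fix i assume "i \<in> S - {j}"
      then have "u i x \<le> u i y" "i \<in> players n - {j}"
        using S(2,3) voters_subset_players by auto
      then show "u i x < u i z"
        using better by (meson le_less_trans)
    qed
    ultimately show ?thesis
      using \<open>z \<in> X\<close> by (simp add: U_def)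
  qed
  moreover have "u 0 x < u 0 z"
    using VAas_upper[OF x self_in_Mas, of D] \<open>z \<in> U\<close> unfolding U_def by simp
  ultimately show False
    by auto
qed

lemma expropriated_persistent:
  assumes thin: "thin_individual_indifference X u n"
    and D: "D \<subseteq> Pow (voters n)"
    and x: "x \<in> X" and y: "y \<in> Phi_or X u D x" and j: "j \<in> expropriated x"
  shows "j \<in> expropriated y"
proof -
  obtain S where S: "S \<in> D" "\<forall>i\<in>S. u i x \<le> u i y"
    using Phi_orD(3)[OF y] by blast
  have "S \<subseteq> voters n" and "j \<in> voters n"
    using S D j expropriated_subset_voters by auto
  then show ?thesis
    using expropriated_outside_coalition[OF x y S(1) _ S(2)]
      expropriated_coalition_member_persistent[OF thin x y S(1) _ S(2) _ j]
    by blast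
qed

lemma expropriated_outside_quota_supporters:
  assumes x: "x \<in> X" and y: "y \<in> Phi_or X u (quota_rule n q) x"
    and j: "j \<in> voters n" "q \<le> card ({i\<in>voters n. u i x \<le> u i y} - {j})"
  shows "j \<in> expropriated y"
proof -
  have "{i\<in>voters n. u i x \<le> u i y} - {j} \<in> quota_rule n q"
    using j(2) by (auto simp: quota_rule_def)
  then show ?thesis
    using expropriated_outside_coalition[OF x y] j(1) by auto
qed

lemma card_expropriated_step_quota:
  assumes thin: "thin_individual_indifference X u n"
    and x: "x \<in> X" and y: "y \<in> Phi_or X u (quota_rule n q) x"
  shows "min n (card (expropriated x) + (n - q)) \<le> card (expropriated y)"
proof -
  define S0 where "S0 = {i\<in>voters n. u i x \<le> u i y}"
  have "S0 \<subseteq> voters n" and "finite S0"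
    by (auto simp: S0_def)
  obtain S where "S \<in> quota_rule n q" "\<forall>i\<in>S. u i x \<le> u i y"
    using Phi_orD(3)[OF y] by blast
  then have "q \<le> card S" "S \<subseteq> S0"
    by (auto simp: quota_rule_def S0_def)
  then have "q \<le> card S0"
    using card_mono[OF \<open>finite S0\<close> \<open>S \<subseteq> S0\<close>] by linarith
  note dropped = expropriated_outside_quota_supporters[OF x y, folded S0_def]
  consider "card S0 = q" | "q < card S0"
    using \<open>q \<le> card S0\<close> by linarith
  then show ?thesis
  proof cases
    case 1
    have "expropriated x \<subseteq> S0"
      using Phi_orD(1)[OF y] by (auto simp: expropriated_def S0_def)
    moreover have "card (voters n - S0) = n - q"
      using 1 \<open>S0 \<subseteq> voters n\<close> \<open>finite S0\<close> by (simp add: card_Diff_subset)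
    ultimately have "card (expropriated x) + (n - q) = card (expropriated x \<union> (voters n - S0))"
      by (subst card_Un_disjoint) auto
    also have "\<dots> \<le> card (expropriated y)"
    proof (intro card_mono finite_expropriated Un_least)
      show "expropriated x \<subseteq> expropriated y"
        using expropriated_persistent[OF thin quota_rule_subset_Pow_voters x y] by blast
      show "voters n - S0 \<subseteq> expropriated y"
        using dropped 1 by (simp add: Diff_insert_absorb subset_iff)
    qed
    finally show ?thesis
      by simp
  next
    case 2
    have "voters n \<subseteq> expropriated y"
    proof
      fix j assume "j \<in> voters n"
      have "card S0 - 1 \<le> card (S0 - {j})"
        by (simp add: card_Diff_singleton_if)
      then show "j \<in> expropriated y"
        using dropped \<open>j \<in> voters n\<close> 2 by simp
    qed
    then show ?thesis
      using card_mono[of "expropriated y" "voters n"] by simp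
  qed
qed

lemma newly_expropriated_veto_proof:
  assumes D: "D \<subseteq> Pow (voters n)" "veto_proof n D"
    and x: "x \<in> X" and y: "y \<in> Phi_or X u D x"
    and "expropriated x \<noteq> voters n"
  shows "\<exists>j\<in>voters n - expropriated x. j \<in> expropriated y"
proof -
  obtain S where S: "S \<in> D" "\<forall>i\<in>S. u i x \<le> u i y"
    using Phi_orD(3)[OF y] by blast
  have "S \<subseteq> voters n"
    using S(1) D(1) by blast
  show ?thesis
  proof (cases "voters n - S \<subseteq> expropriated x")
    case False
    then show ?thesis
      using expropriated_outside_coalition[OF x y S(1) \<open>S \<subseteq> voters n\<close> S(2)] by blast
  next
    case True
    have "\<forall>i\<in>voters n. u i x \<le> u i y"
      using True S(2) Phi_orD(1)[OF y] by (auto simp: expropriated_def)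
    obtain j where j: "j \<in> voters n" "j \<notin> expropriated x"
      using assms(5) expropriated_subset_voters by blast
    then obtain S' where "S' \<in> D" "S' \<subseteq> voters n - {j}"
      using D(2) unfolding veto_proof_def by blast
    then have "j \<in> expropriated y"
      using expropriated_outside_coalition[OF x y, of S' j] \<open>\<forall>i\<in>voters n. u i x \<le> u i y\<close> j(1)
      by blast
    then show ?thesis
      using j by blast
  qed
qed

lemma card_expropriated_step_veto_proof:
  assumes thin: "thin_individual_indifference X u n"
    and D: "D \<subseteq> Pow (voters n)" "veto_proof n D"
    and x: "x \<in> X" and y: "y \<in> Phi_or X u D x"
  shows "min n (card (expropriated x) + 1) \<le> card (expropriated y)"
proof (cases "expropriated x = voters n")
  case True
  then have "expropriated y = voters n"
    using expropriated_persistent[OF thin D(1) x y] expropriated_subset_voters by blast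
  then show ?thesis
    by simp
next
  case False
  then have "expropriated x \<subset> expropriated y"
    using newly_expropriated_veto_proof[OF D x y] expropriated_persistent[OF thin D(1) x y] by blast
  then have "card (expropriated x) < card (expropriated y)"
    by (rule psubset_card_mono[OF finite_expropriated])
  then show ?thesis
    by (simp add: min_le_iff_disj)
qed

lemma XA_star_if_all_expropriated:
  assumes D: "D \<subseteq> Pow (voters n)" and x: "x \<in> X" and w: "w \<in> Phi_or X u D x"
    and all: "expropriated w = voters n"
  shows "w \<in> XA_star X u"
proof (rule ccontr)
  assume "w \<notin> XA_star X u"
  then obtain y where "y \<in> X" "u 0 w < u 0 y"
    using Phi_orD(1)[OF w] by (auto simp: XA_star_def not_le)
  then consider (worse) j z where "j \<in> players n - {0}" "z \<in> X" "u j z < u j w"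
    | (pareto) z where "z \<in> X" "\<forall>k\<in>players n. u k w < u k z"
    using scarcity[OF zero_in_players Phi_orD(1)[OF w]] by blast
  then show False
  proof cases
    case worse
    then have "j \<in> expropriated w"
      using all by (auto simp: players_def voters_def)
    then show False
      using worse by (auto simp: expropriated_def not_le)
  next
    case pareto
    obtain S where "S \<in> D" "\<forall>i\<in>S. u i x \<le> u i w"
      using Phi_orD(3)[OF w] by blast
    moreover have "\<forall>i\<in>S. u i w < u i z"
      using pareto \<open>S \<in> D\<close> D voters_subset_players by blast
    ultimately have "u 0 z \<le> u 0 w"
      using Phi_or_setter_optimal[OF x w] pareto(1) by blast
    then show False
      using pareto(2) zero_in_players by (meson not_le)
  qed
qed

lemma compose_selections_in_XA_star:
  assumes D: "D \<subseteq> Pow (voters n)" and "0 < n"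
    and step: "\<forall>x\<in>X. \<forall>y\<in>Phi_or X u D x. min n (card (expropriated x) + d) \<le> card (expropriated y)"
    and sel: "\<forall>t\<in>{1..T}. is_selection X u D (phi t)"
    and T: "n \<le> T * d" and x: "x \<in> X"
  shows "compose_sel phi T x \<in> XA_star X u"
proof -
  have phi: "\<forall>t\<in>{1..T}. \<forall>x\<in>X. phi t x \<in> X \<and> min n (card (expropriated x) + d) \<le> card (expropriated (phi t x))"
    using sel step Phi_orD(1) unfolding is_selection_def by blast
  obtain k where "T = Suc k"
    using T \<open>0 < n\<close> by (cases T) auto
  define x' where "x' = compose_sel (\<lambda>t. phi (Suc t)) k x"
  have "x' \<in> X"
    unfolding x'_def using phi \<open>T = Suc k\<close> x by (intro compose_sel_closed) auto
  moreover have "compose_sel phi T x = phi 1 x'"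
    unfolding x'_def \<open>T = Suc k\<close> by (simp only: compose_sel_Suc_outer comp_apply)
  ultimately have "compose_sel phi T x \<in> Phi_or X u D x'"
    using sel \<open>T = Suc k\<close> by (simp add: is_selection_def)
  moreover have "n \<le> card (expropriated (compose_sel phi T x))"
    using compose_sel_progress[OF phi x] T by linarith
  then have "expropriated (compose_sel phi T x) = voters n"
    using card_seteq[OF finite_voters expropriated_subset_voters] by simp
  ultimately show ?thesis
    using XA_star_if_all_expropriated[OF D \<open>x' \<in> X\<close>] by blast
qed

end

theorem lemma10:
  fixes X :: "'x::metric_space set" and u :: "nat \<Rightarrow> 'x \<Rightarrow> real" and n :: nat
  assumes "n \<ge> 1"
    and "compact X"
    and "\<forall>i\<in>players n. continuous_on X (u i)"
    and "distribution_problem X u n"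
    and "thin_individual_indifference X u n"
  shows "(\<forall>q T phi. q < n \<longrightarrow>
            (\<forall>t\<in>{1..T}. is_selection X u (quota_rule n q) (phi t)) \<longrightarrow>
            int T \<ge> \<lceil>real n / real (n - q)\<rceil> \<longrightarrow>
            (\<forall>x\<in>X. compose_sel phi T x \<in> XA_star X u))
       \<and> (\<forall>D T phi. D \<subseteq> Pow (voters n) \<longrightarrow> veto_proof n D \<longrightarrow>
            (\<forall>t\<in>{1..T}. is_selection X u D (phi t)) \<longrightarrow>
            T \<ge> n \<longrightarrow>
            (\<forall>x\<in>X. compose_sel phi T x \<in> XA_star X u))"
proof -
  interpret distribution_setting X u n
    using assms(2-4) by unfold_locales
  have "0 < n"
    using assms(1) by simp
  show ?thesis
  proof (intro conjI allI impI ballI)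
    fix q T phi x
    assume "q < n" "\<forall>t\<in>{1..T}. is_selection X u (quota_rule n q) (phi t)"
      "\<lceil>real n / real (n - q)\<rceil> \<le> int T" "x \<in> X"
    moreover have "\<forall>x\<in>X. \<forall>y\<in>Phi_or X u (quota_rule n q) x.
        min n (card (expropriated x) + (n - q)) \<le> card (expropriated y)"
      using card_expropriated_step_quota[OF assms(5)] by blast
    moreover have "n \<le> T * (n - q)"
      using ceiling_divide_le_imp_le_mult \<open>q < n\<close> calculation(3) by simp
    ultimately show "compose_sel phi T x \<in> XA_star X u"
      using compose_selections_in_XA_star[OF quota_rule_subset_Pow_voters \<open>0 < n\<close>] by blast
  next
    fix D T phi x
    assume "D \<subseteq> Pow (voters n)" "veto_proof n D" "\<forall>t\<in>{1..T}. is_selection X u D (phi t)"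
      "n \<le> T" "x \<in> X"
    moreover have "\<forall>x\<in>X. \<forall>y\<in>Phi_or X u D x.
        min n (card (expropriated x) + 1) \<le> card (expropriated y)"
      using card_expropriated_step_veto_proof[OF assms(5)] calculation(1,2) by blast
    ultimately show "compose_sel phi T x \<in> XA_star X u"
      using compose_selections_in_XA_star[where d = 1] \<open>0 < n\<close> by simp
  qed
qed

end
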